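(* Let $M=(S,\mathrm{Act},P)$ be an MDP, $T\subseteq S$, $\mathrm{opt}\in\{\min,\max\}$, let $Z=\{s\in S\mid\Pr^{\mathrm{opt}}_s(\Diamond T)=0\}$, and let $r$ be the least fixed point of $\tilde D^{\mathrm{opt}}$. Then for all $s\in S$: $r(s)=0$ if and only if $s\in Z$.
   Context: An MDP is a tuple $M=(S,\mathrm{Act},P)$ with $S$ finite, $\mathrm{Act}$ finite, $P\colon S\times\mathrm{Act}\times S\to[0,1]$ with $\sum_{s'}P(s,a,s')\in\{0,1\}$; $\mathrm{Act}(s)=\{a\mid\sum_{s'}P(s,a,s')=1\}$ is nonempty for all $s$; $\mathrm{Post}(s,a)=\{s'\mid P(s,a,s')>0\}$. A strategy is $\sigma\colon S\to\mathrm{Act}$ with $\sigma(s)\in\mathrm{Act}(s)$, inducing a Markov chain with transitions $P(s,\sigma(s),\cdot)$; $\Pr^\sigma_s(\Diamond T)$ is the probability of visiting $T$ from $s$ and $\Pr^{\mathrm{opt}}_s(\Diamond T)=\mathrm{opt}_\sigma\Pr^\sigma_s(\Diamond T)$. $\mathbb{N}_\infty=\mathbb{N}\cup\{\infty\}$ with $\infty+1=\infty$. $\tilde D^{\mathrm{opt}}(r)(s)=\infty$ for $s\in T$ and $\mathrm{opt}_{a\in\mathrm{Act}(s)}\big(\min_{s'\in\mathrm{Post}(s,a)}r(s')+[\exists u,v\in\mathrm{Post}(s,a)\colon r(u)\ne r(v)]\big)$ for $s\notin T$ ($[\varphi]\in\{0,1\}$ the Iverson bracket); it is monotone w.r.t.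 the pointwise order, so its least fixed point exists. *)

theory Defs
  imports Complex_Main "HOL-Library.Extended_Nat"
begin

definition is_mdp :: "('s::finite \<Rightarrow> 'a::finite \<Rightarrow> 's \<Rightarrow> real) \<Rightarrow> bool" where
  "is_mdp P \<longleftrightarrow>
     (\<forall>s a s'. 0 \<le> P s a s' \<and> P s a s' \<le> 1) \<and>
     (\<forall>s a. (\<Sum>s'\<in>UNIV. P s a s') \<in> {0, 1}) \<and>
     (\<forall>s. \<exists>a. (\<Sum>s'\<in>UNIV. P s a s') = 1)"

definition Act :: "('s::finite \<Rightarrow> 'a::finite \<Rightarrow> 's \<Rightarrow> real) \<Rightarrow> 's \<Rightarrow> 'a set" where
  "Act P s = {a. (\<Sum>s'\<in>UNIV. P s a s') = 1}"

definition Post :: "('s::finite \<Rightarrow> 'a::finite \<Rightarrow> 's \<Rightarrow> real) \<Rightarrow> 's \<Rightarrow> 'a \<Rightarrow> 's set" where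
  "Post P s a = {s'. P s a s' > 0}"

definition strategies :: "('s::finite \<Rightarrow> 'a::finite \<Rightarrow> 's \<Rightarrow> real) \<Rightarrow> ('s \<Rightarrow> 'a) set" where
  "strategies P = {\<sigma>. \<forall>s. \<sigma> s \<in> Act P s}"

fun reach_within :: "('s::finite \<Rightarrow> 'a::finite \<Rightarrow> 's \<Rightarrow> real) \<Rightarrow> 's set \<Rightarrow> ('s \<Rightarrow> 'a) \<Rightarrow> nat \<Rightarrow> 's \<Rightarrow> real" where
  "reach_within P T \<sigma> 0 s = (if s \<in> T then 1 else 0)"
| "reach_within P T \<sigma> (Suc n) s =
     (if s \<in> T then 1 else (\<Sum>s'\<in>UNIV. P s (\<sigma> s) s' * reach_within P T \<sigma> n s'))"

text \<open>Pr^\<sigma>_s(\<Diamond>T): limit (supremum) of the step-bounded reachability probabilities.\<close>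
definition reach_prob :: "('s::finite \<Rightarrow> 'a::finite \<Rightarrow> 's \<Rightarrow> real) \<Rightarrow> 's set \<Rightarrow> ('s \<Rightarrow> 'a) \<Rightarrow> 's \<Rightarrow> real" where
  "reach_prob P T \<sigma> s = (SUP n. reach_within P T \<sigma> n s)"

datatype opt = OMin | OMax

definition opt_of :: "opt \<Rightarrow> 'b::linorder set \<Rightarrow> 'b" where
  "opt_of o' A = (case o' of OMin \<Rightarrow> Min A | OMax \<Rightarrow> Max A)"

text \<open>Pr^opt_s(\<Diamond>T), optimum over (memoryless deterministic) strategies.\<close>
definition reach_prob_opt :: "('s::finite \<Rightarrow> 'a::finite \<Rightarrow> 's \<Rightarrow> real) \<Rightarrow> 's set \<Rightarrow> opt \<Rightarrow> 's \<Rightarrow> real" where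
  "reach_prob_opt P T o' s = opt_of o' ((\<lambda>\<sigma>. reach_prob P T \<sigma> s) ` strategies P)"

definition Dtilde :: "('s::finite \<Rightarrow> 'a::finite \<Rightarrow> 's \<Rightarrow> real) \<Rightarrow> 's set \<Rightarrow> opt \<Rightarrow> ('s \<Rightarrow> enat) \<Rightarrow> ('s \<Rightarrow> enat)" where
  "Dtilde P T o' r s =
     (if s \<in> T then \<infinity>
      else opt_of o' ((\<lambda>a. Min (r ` Post P s a)
                           + (if \<exists>u\<in>Post P s a. \<exists>v\<in>Post P s a. r u \<noteq> r v then 1 else 0))
                      ` Act P s))"

end

theory Submission
  imports Defs
begin

(* Both zero sets are the largest set Z of non-target states in which the optimizing
   scheduler can keep the system: from every state of Z some action (opt = min), resp.
   every action (opt = max), leads only into Z; such Z are called opt_closed below.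

   A non-target state is a zero of D-tilde(r) iff some (every) action has all its
   successors among the zeros of r: the minimum of r over the successors must be 0 and
   r must not vary there. Hence the zero set of the least fixed point is such a set Z,
   and conversely lowering the least fixed point to 0 on such a Z gives a pre-fixed
   point, so the least fixed point vanishes on Z.

   For a single strategy, the probability of reaching T vanishes exactly on the sets
   avoiding T that are closed under the strategy. For min, a set Z as above yields a
   strategy that never leaves it. For max, the states from which no strategy reaches T
   form such a set, since redirecting a strategy at one of these states changes no
   reachability probability. *)

definition opt_quant :: "opt \<Rightarrow> 'b set \<Rightarrow> ('b \<Rightarrow> bool) \<Rightarrow> bool" where
  "opt_quant o' A Q \<longleftrightarrow> (case o' of OMin \<Rightarrow> \<exists>a\<in>A. Q a | OMax \<Rightarrow> \<forall>a\<in>A. Q a)"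

lemma opt_quant_mono:
  "opt_quant o' A Q \<Longrightarrow> (\<And>a. a \<in> A \<Longrightarrow> Q a \<Longrightarrow> Q' a) \<Longrightarrow> opt_quant o' A Q'"
  unfolding opt_quant_def by (cases o') auto

lemma opt_quant_cong:
  "(\<And>a. a \<in> A \<Longrightarrow> Q a \<longleftrightarrow> Q' a) \<Longrightarrow> opt_quant o' A Q \<longleftrightarrow> opt_quant o' A Q'"
  unfolding opt_quant_def by (cases o') auto

lemma opt_of_mono:
  fixes f g :: "'a \<Rightarrow> 'b::linorder"
  assumes "finite A" "A \<noteq> {}" "\<And>a. a \<in> A \<Longrightarrow> f a \<le> g a"
  shows "opt_of o' (f ` A) \<le> opt_of o' (g ` A)"
proof (cases o')
  case OMin
  have "Min (f ` A) \<le> g a" if "a \<in> A" for a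
    using assms(1) that order.trans[OF Min_le assms(3)[OF that]] by simp
  with assms(1,2) OMin show ?thesis by (simp add: opt_of_def)
next
  case OMax
  have "f a \<le> Max (g ` A)" if "a \<in> A" for a
    using assms(1) that order.trans[OF assms(3)[OF that] Max_ge] by simp
  with assms(1,2) OMax show ?thesis by (simp add: opt_of_def)
qed

lemma opt_of_eq_0_iff:
  fixes f :: "'a \<Rightarrow> 'b::{linorder,zero}"
  assumes "finite A" "A \<noteq> {}" "\<And>a. a \<in> A \<Longrightarrow> 0 \<le> f a"
  shows "opt_of o' (f ` A) = 0 \<longleftrightarrow> opt_quant o' A (\<lambda>a. f a = 0)"
proof (cases o')
  case OMin
  have "Min (f ` A) = 0 \<longleftrightarrow> (\<exists>a\<in>A. f a = 0)"
  proof
    assume "Min (f ` A) = 0"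
    then show "\<exists>a\<in>A. f a = 0" using Min_in[of "f ` A"] assms(1,2) by force
  next
    assume "\<exists>a\<in>A. f a = 0"
    then have "Min (f ` A) \<le> 0" using assms(1) by (metis Min_le finite_imageI imageI)
    moreover have "0 \<le> Min (f ` A)" using assms by simp
    ultimately show "Min (f ` A) = 0" by simp
  qed
  then show ?thesis using OMin by (simp add: opt_of_def opt_quant_def)
next
  case OMax
  have "Max (f ` A) = 0 \<longleftrightarrow> (\<forall>a\<in>A. f a = 0)"
  proof
    assume "Max (f ` A) = 0"
    then have "f a \<le> 0" if "a \<in> A" for a using assms(1) that by (metis Max_ge finite_imageI imageI)
    then show "\<forall>a\<in>A. f a = 0" using assms(3) by (simp add: order_antisym)
  next
    assume "\<forall>a\<in>A. f a = 0"
    then have "f ` A = {0}" using assms(2) by auto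
    then show "Max (f ` A) = 0" by simp
  qed
  then show ?thesis using OMax by (simp add: opt_of_def opt_quant_def)
qed

lemma is_mdp_nonneg: "is_mdp P \<Longrightarrow> 0 \<le> P s a s'"
  unfolding is_mdp_def by blast

lemma notin_Post_eq_0: "is_mdp P \<Longrightarrow> s' \<notin> Post P s a \<Longrightarrow> P s a s' = 0"
  unfolding Post_def using is_mdp_nonneg[of P s a s'] by simp

lemma Act_nonempty: "is_mdp P \<Longrightarrow> Act P s \<noteq> {}"
  unfolding is_mdp_def Act_def by auto

lemma Post_nonempty:
  assumes "is_mdp P" "a \<in> Act P s"
  shows "Post P s a \<noteq> {}"
proof
  assume "Post P s a = {}"
  with assms(1) have "P s a s' = 0" for s' by (simp add: notin_Post_eq_0)
  with assms(2) show False unfolding Act_def by simp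
qed

lemma strategy_exists:
  assumes "\<And>s. \<exists>a\<in>Act P s. Q s a"
  shows "\<exists>\<sigma>\<in>strategies P. \<forall>s. Q s (\<sigma> s)"
proof -
  from assms obtain \<sigma> where "\<forall>s. \<sigma> s \<in> Act P s \<and> Q s (\<sigma> s)" by metis
  then show ?thesis unfolding strategies_def by blast
qed

lemma strategies_nonempty: "is_mdp P \<Longrightarrow> strategies P \<noteq> {}"
  using strategy_exists[of P "\<lambda>_ _. True"] Act_nonempty by blast

definition succ_value :: "('s \<Rightarrow> enat) \<Rightarrow> 's set \<Rightarrow> enat" where
  "succ_value r X = Min (r ` X) + (if \<exists>u\<in>X. \<exists>v\<in>X. r u \<noteq> r v then 1 else 0)"

lemma Dtilde_notin:
  "s \<notin> T \<Longrightarrow> Dtilde P T o' r s = opt_of o' ((\<lambda>a. succ_value r (Post P s a)) ` Act P s)"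
  by (simp add: Dtilde_def succ_value_def)

lemma succ_value_eq_0_iff:
  assumes "finite X" "X \<noteq> {}"
  shows "succ_value r X = 0 \<longleftrightarrow> (\<forall>x\<in>X. r x = 0)"
proof
  assume value_0: "succ_value r X = 0"
  have const: "r u = r v" if "u \<in> X" "v \<in> X" for u v
  proof (rule ccontr)
    assume "r u \<noteq> r v"
    with that have "\<exists>u\<in>X. \<exists>v\<in>X. r u \<noteq> r v" by blast
    with value_0 have "Min (r ` X) + 1 = 0" unfolding succ_value_def by simp
    then show False by simp
  qed
  then have const': "\<not> (\<exists>u\<in>X. \<exists>v\<in>X. r u \<noteq> r v)" by blast
  have "Min (r ` X) + 0 = 0" using value_0 unfolding succ_value_def if_not_P[OF const'] .
  then have "Min (r ` X) = 0" by simp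
  moreover have "Min (r ` X) \<in> r ` X" using assms by (intro Min_in) auto
  ultimately obtain u where u: "u \<in> X" "r u = 0" by (metis imageE)
  show "\<forall>x\<in>X. r x = 0"
  proof
    fix x assume "x \<in> X"
    with u const[of x u] show "r x = 0" by simp
  qed
next
  assume all_0: "\<forall>x\<in>X. r x = 0"
  then have const: "\<not> (\<exists>u\<in>X. \<exists>v\<in>X. r u \<noteq> r v)" by simp
  have "succ_value r X = Min (r ` X) + 0" unfolding succ_value_def if_not_P[OF const] ..
  also have "r ` X = {0}" using all_0 assms(2) by auto
  finally show "succ_value r X = 0" by simp
qed

lemma Min_less_if_nonconst:
  fixes r :: "'a \<Rightarrow> 'b::linorder"
  assumes "finite X" "u \<in> X" "v \<in> X" "r u \<noteq> r v" "\<And>x. x \<in> X \<Longrightarrow> r x \<le> c"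
  shows "Min (r ` X) < c"
proof -
  have "r u \<le> c" "r v \<le> c" using assms(2,3,5) by blast+
  with assms(4) have "r u < c \<or> r v < c" by (metis le_neq_trans)
  then obtain w where w: "w \<in> X" "r w < c" using assms(2,3) by blast
  have "Min (r ` X) \<le> r w" using assms(1) w(1) by simp
  also have "\<dots> < c" by (rule w(2))
  finally show ?thesis .
qed

lemma succ_value_mono:
  assumes "finite X" "X \<noteq> {}" "r \<le> r'"
  shows "succ_value r X \<le> succ_value r' X"
proof -
  have le: "r x \<le> r' x" for x using assms(3) by (simp add: le_fun_def)
  have Min_le_Min: "Min (r ` X) \<le> Min (r' ` X)"
    using assms(1,2) le by (auto intro: order.trans[OF Min_le])
  show ?thesis
  proof (cases "\<exists>u\<in>X. \<exists>v\<in>X. r' u \<noteq> r' v")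
    case True
    have "succ_value r X \<le> Min (r' ` X) + 1"
      unfolding succ_value_def using Min_le_Min by (intro add_mono) auto
    then show ?thesis unfolding succ_value_def if_P[OF True] .
  next
    case r'_const: False
    then obtain c where c: "\<And>x. x \<in> X \<Longrightarrow> r' x = c" using assms(2) by blast
    have "r' ` X = {c}" using c assms(2) by auto
    then have r'_value: "succ_value r' X = c"
      unfolding succ_value_def if_not_P[OF r'_const] by simp
    show ?thesis
    proof (cases "\<exists>u\<in>X. \<exists>v\<in>X. r u \<noteq> r v")
      case True
      then obtain u v where uv: "u \<in> X" "v \<in> X" "r u \<noteq> r v" by blast
      have "Min (r ` X) < c"
        by (rule Min_less_if_nonconst[OF assms(1) uv]) (metis c le)
      then have "Min (r ` X) + 1 \<le> c" by (metis ileI1 eSuc_plus_1)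
      then have "succ_value r X \<le> c" unfolding succ_value_def if_P[OF True] .
      with r'_value show ?thesis by simp
    next
      case False
      have "Min (r ` X) + 0 \<le> Min (r' ` X) + 0" using Min_le_Min by simp
      then show ?thesis unfolding succ_value_def if_not_P[OF False] if_not_P[OF r'_const] .
    qed
  qed
qed

lemma mono_Dtilde:
  fixes P :: "'s::finite \<Rightarrow> 'a::finite \<Rightarrow> 's \<Rightarrow> real"
  assumes "is_mdp P"
  shows "mono (Dtilde P T o')"
proof (rule monoI, rule le_funI)
  fix r r' :: "'s \<Rightarrow> enat" and s
  assume "r \<le> r'"
  show "Dtilde P T o' r s \<le> Dtilde P T o' r' s"
  proof (cases "s \<in> T")
    case True
    then show ?thesis by (simp add: Dtilde_def)
  next
    case False
    have "succ_value r (Post P s a) \<le> succ_value r' (Post P s a)" if "a \<in> Act P s" for a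
      using Post_nonempty[OF assms that] \<open>r \<le> r'\<close> by (intro succ_value_mono) auto
    then show ?thesis
      unfolding Dtilde_notin[OF False] using Act_nonempty[OF assms] by (intro opt_of_mono) auto
  qed
qed

lemma Dtilde_eq_0_iff:
  assumes "is_mdp P" "s \<notin> T"
  shows "Dtilde P T o' r s = 0 \<longleftrightarrow> opt_quant o' (Act P s) (\<lambda>a. Post P s a \<subseteq> {t. r t = 0})"
proof -
  have "Dtilde P T o' r s = 0 \<longleftrightarrow> opt_quant o' (Act P s) (\<lambda>a. succ_value r (Post P s a) = 0)"
    unfolding Dtilde_notin[OF assms(2)] using Act_nonempty[OF assms(1)]
    by (intro opt_of_eq_0_iff) auto
  also have "\<dots> \<longleftrightarrow> opt_quant o' (Act P s) (\<lambda>a. Post P s a \<subseteq> {t. r t = 0})"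
    by (intro opt_quant_cong) (auto simp: succ_value_eq_0_iff Post_nonempty[OF assms(1)])
  finally show ?thesis .
qed

definition opt_closed :: "('s::finite \<Rightarrow> 'a::finite \<Rightarrow> 's \<Rightarrow> real) \<Rightarrow> opt \<Rightarrow> 's set \<Rightarrow> bool" where
  "opt_closed P o' Z \<longleftrightarrow> (\<forall>z\<in>Z. opt_quant o' (Act P z) (\<lambda>a. Post P z a \<subseteq> Z))"

lemma lfp_Dtilde_zeros_opt_closed:
  fixes P :: "'s::finite \<Rightarrow> 'a::finite \<Rightarrow> 's \<Rightarrow> real" and T o'
  assumes "is_mdp P"
  defines "Z \<equiv> {t. lfp (Dtilde P T o') t = 0}"
  shows "Z \<inter> T = {}" and "opt_closed P o' Z"
proof -
  let ?r = "lfp (Dtilde P T o')"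
  have fixp: "Dtilde P T o' ?r t = ?r t" for t
    using lfp_fixpoint[OF mono_Dtilde[OF assms(1)]] by simp
  have "?r t = \<infinity>" if "t \<in> T" for t
    using fixp[of t] that by (simp add: Dtilde_def)
  then show disjoint: "Z \<inter> T = {}" unfolding Z_def by force
  show "opt_closed P o' Z" unfolding opt_closed_def
  proof
    fix t assume "t \<in> Z"
    then have "Dtilde P T o' ?r t = 0" using fixp unfolding Z_def by simp
    moreover have "t \<notin> T" using \<open>t \<in> Z\<close> disjoint by blast
    ultimately show "opt_quant o' (Act P t) (\<lambda>a. Post P t a \<subseteq> Z)"
      using Dtilde_eq_0_iff[OF assms(1)] unfolding Z_def by blast
  qed
qed

lemma lfp_Dtilde_eq_0_if_opt_closed:
  fixes P :: "'s::finite \<Rightarrow> 'a::finite \<Rightarrow> 's \<Rightarrow> real"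
  assumes "is_mdp P" "Z \<inter> T = {}" "opt_closed P o' Z" "s \<in> Z"
  shows "lfp (Dtilde P T o') s = 0"
proof -
  let ?r = "lfp (Dtilde P T o')"
  define r' where "r' t = (if t \<in> Z then 0 else ?r t)" for t
  have "Dtilde P T o' r' t \<le> r' t" for t
  proof (cases "t \<in> Z")
    case True
    then have "t \<notin> T" using assms(2) by blast
    have "opt_quant o' (Act P t) (\<lambda>a. Post P t a \<subseteq> Z)"
      using assms(3) True unfolding opt_closed_def by blast
    moreover have "Z \<subseteq> {t. r' t = 0}" unfolding r'_def by auto
    ultimately have "opt_quant o' (Act P t) (\<lambda>a. Post P t a \<subseteq> {t. r' t = 0})"
      by (blast intro: opt_quant_mono)
    then have "Dtilde P T o' r' t = 0" using Dtilde_eq_0_iff[OF assms(1) \<open>t \<notin> T\<close>] by blast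
    then show ?thesis by simp
  next
    case False
    have "r' \<le> ?r" unfolding r'_def by (simp add: le_fun_def)
    then have "Dtilde P T o' r' t \<le> Dtilde P T o' ?r t"
      using mono_Dtilde[OF assms(1)] by (simp add: mono_def le_fun_def)
    also have "\<dots> = ?r t" using lfp_fixpoint[OF mono_Dtilde[OF assms(1)]] by simp
    finally show ?thesis using False unfolding r'_def by simp
  qed
  then have "?r \<le> r'" by (intro lfp_lowerbound le_funI)
  then have "?r s \<le> r' s" by (rule le_funD)
  then show ?thesis using assms(4) unfolding r'_def by simp
qed

lemma lfp_Dtilde_eq_0_iff:
  assumes "is_mdp P"
  shows "lfp (Dtilde P T o') s = 0 \<longleftrightarrow> (\<exists>Z. s \<in> Z \<and> Z \<inter> T = {} \<and> opt_closed P o' Z)"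
proof
  assume "lfp (Dtilde P T o') s = 0"
  then show "\<exists>Z. s \<in> Z \<and> Z \<inter> T = {} \<and> opt_closed P o' Z"
    using lfp_Dtilde_zeros_opt_closed[OF assms, where T=T and o'=o']
    by (intro exI[of _ "{t. lfp (Dtilde P T o') t = 0}"]) simp
next
  assume "\<exists>Z. s \<in> Z \<and> Z \<inter> T = {} \<and> opt_closed P o' Z"
  then obtain Z where "s \<in> Z" "Z \<inter> T = {}" "opt_closed P o' Z" by blast
  then show "lfp (Dtilde P T o') s = 0" by (intro lfp_Dtilde_eq_0_if_opt_closed[OF assms])
qed

lemma reach_within_bounds:
  assumes "is_mdp P"
  shows "0 \<le> reach_within P T \<sigma> n s \<and> reach_within P T \<sigma> n s \<le> 1"
proof (induction n arbitrary: s)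
  case 0
  then show ?case by simp
next
  case (Suc n)
  let ?p = "P s (\<sigma> s)"
  have "(\<Sum>s'\<in>UNIV. ?p s' * reach_within P T \<sigma> n s') \<le> (\<Sum>s'\<in>UNIV. ?p s')"
    using Suc.IH is_mdp_nonneg[OF assms] by (intro sum_mono) (simp add: mult_left_le)
  also have "\<dots> \<le> 1"
    using assms unfolding is_mdp_def by (metis insert_iff singletonD order.refl zero_le_one)
  finally have "(\<Sum>s'\<in>UNIV. ?p s' * reach_within P T \<sigma> n s') \<le> 1" .
  moreover have "0 \<le> (\<Sum>s'\<in>UNIV. ?p s' * reach_within P T \<sigma> n s')"
    using Suc.IH is_mdp_nonneg[OF assms] by (intro sum_nonneg) simp
  ultimately show ?case by simp
qed

lemma reach_within_le_reach_prob:
  assumes "is_mdp P"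
  shows "reach_within P T \<sigma> n s \<le> reach_prob P T \<sigma> s"
proof -
  have "bdd_above (range (\<lambda>n. reach_within P T \<sigma> n s))"
    using reach_within_bounds[OF assms] by (intro bdd_aboveI2[where M=1]) blast
  then show ?thesis unfolding reach_prob_def by (rule cSUP_upper[rotated]) simp
qed

lemma reach_prob_nonneg: "is_mdp P \<Longrightarrow> 0 \<le> reach_prob P T \<sigma> s"
  using reach_within_bounds reach_within_le_reach_prob order.trans by blast

lemma reach_prob_eq_0_iff:
  assumes "is_mdp P"
  shows "reach_prob P T \<sigma> s = 0 \<longleftrightarrow> (\<forall>n. reach_within P T \<sigma> n s = 0)"
proof
  assume "reach_prob P T \<sigma> s = 0"
  then have "reach_within P T \<sigma> n s \<le> 0" for n
    using reach_within_le_reach_prob[OF assms, of T \<sigma> n s] by simp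
  then show "\<forall>n. reach_within P T \<sigma> n s = 0"
    using reach_within_bounds[OF assms] by (meson order_antisym)
next
  assume "\<forall>n. reach_within P T \<sigma> n s = 0"
  then show "reach_prob P T \<sigma> s = 0" unfolding reach_prob_def by simp
qed

lemma reach_prob_target:
  assumes "s \<in> T"
  shows "reach_prob P T \<sigma> s = 1"
proof -
  have "reach_within P T \<sigma> n s = 1" for n using assms by (cases n) simp_all
  then show ?thesis unfolding reach_prob_def by simp
qed

lemma reach_prob_eq_0_notin: "reach_prob P T \<sigma> t = 0 \<Longrightarrow> t \<notin> T"
  using reach_prob_target by (metis zero_neq_one)

lemma reach_within_eq_0_if_closed:
  assumes "is_mdp P" "Z \<inter> T = {}" "\<And>z. z \<in> Z \<Longrightarrow> Post P z (\<sigma> z) \<subseteq> Z" "z \<in> Z"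
  shows "reach_within P T \<sigma> n z = 0"
  using assms(4)
proof (induction n arbitrary: z)
  case 0
  then show ?case using assms(2) by auto
next
  case (Suc n)
  have "P z (\<sigma> z) s' * reach_within P T \<sigma> n s' = 0" for s'
  proof (cases "s' \<in> Post P z (\<sigma> z)")
    case True
    then have "s' \<in> Z" using Suc.prems assms(3) by blast
    then show ?thesis using Suc.IH by simp
  next
    case False
    then show ?thesis using notin_Post_eq_0[OF assms(1)] by simp
  qed
  then have "(\<Sum>s'\<in>UNIV. P z (\<sigma> z) s' * reach_within P T \<sigma> n s') = 0"
    by (intro sum.neutral ballI)
  moreover have "z \<notin> T" using Suc.prems assms(2) by blast
  ultimately show ?case by simp
qed

lemma reach_prob_eq_0_Post:
  assumes "is_mdp P" "reach_prob P T \<sigma> t = 0" "s' \<in> Post P t (\<sigma> t)"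
  shows "reach_prob P T \<sigma> s' = 0"
proof -
  have "t \<notin> T" using assms(2) by (rule reach_prob_eq_0_notin)
  have pos: "0 < P t (\<sigma> t) s'" using assms(3) unfolding Post_def by simp
  have "reach_within P T \<sigma> n s' \<le> 0" for n
  proof -
    have "P t (\<sigma> t) s' * reach_within P T \<sigma> n s'
        \<le> (\<Sum>x\<in>UNIV. P t (\<sigma> t) x * reach_within P T \<sigma> n x)"
      by (rule member_le_sum) (simp_all add: is_mdp_nonneg reach_within_bounds assms(1))
    also have "\<dots> = reach_within P T \<sigma> (Suc n) t" using \<open>t \<notin> T\<close> by simp
    also have "\<dots> = 0" using assms(2) unfolding reach_prob_eq_0_iff[OF assms(1)] by blast
    finally show ?thesis using pos by (simp add: mult_le_0_iff)
  qed
  then have "\<forall>n. reach_within P T \<sigma> n s' = 0"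
    using reach_within_bounds[OF assms(1)] by (meson order_antisym)
  then show ?thesis unfolding reach_prob_eq_0_iff[OF assms(1)] .
qed

lemma reach_prob_eq_0_iff_closed:
  assumes "is_mdp P"
  shows "reach_prob P T \<sigma> s = 0 \<longleftrightarrow> (\<exists>Z. s \<in> Z \<and> Z \<inter> T = {} \<and> (\<forall>z\<in>Z. Post P z (\<sigma> z) \<subseteq> Z))"
proof
  let ?Z = "{t. reach_prob P T \<sigma> t = 0}"
  assume "reach_prob P T \<sigma> s = 0"
  moreover have "?Z \<inter> T = {}" using reach_prob_eq_0_notin by blast
  moreover have "\<forall>z\<in>?Z. Post P z (\<sigma> z) \<subseteq> ?Z" using reach_prob_eq_0_Post[OF assms] by blast
  ultimately show "\<exists>Z. s \<in> Z \<and> Z \<inter> T = {} \<and> (\<forall>z\<in>Z. Post P z (\<sigma> z) \<subseteq> Z)"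
    by (intro exI[of _ ?Z]) simp
next
  assume "\<exists>Z. s \<in> Z \<and> Z \<inter> T = {} \<and> (\<forall>z\<in>Z. Post P z (\<sigma> z) \<subseteq> Z)"
  then obtain Z where Z: "s \<in> Z" "Z \<inter> T = {}" "\<forall>z\<in>Z. Post P z (\<sigma> z) \<subseteq> Z" by blast
  have "reach_within P T \<sigma> n s = 0" for n
    by (rule reach_within_eq_0_if_closed[OF assms Z(2) _ Z(1)]) (use Z(3) in blast)
  then show "reach_prob P T \<sigma> s = 0" unfolding reach_prob_eq_0_iff[OF assms] ..
qed

lemma reach_within_fun_upd:
  assumes "\<And>n. reach_within P T \<sigma> n t = 0" "\<And>n. reach_within P T (\<sigma>(t := a)) n t = 0"
  shows "reach_within P T (\<sigma>(t := a)) n s = reach_within P T \<sigma> n s"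
proof (induction n arbitrary: s)
  case 0
  show ?case by simp
next
  case (Suc n)
  show ?case
  proof (cases "s = t")
    case True
    show ?thesis unfolding True assms ..
  next
    case False
    with Suc.IH show ?thesis by simp
  qed
qed

lemma reach_prob_fun_upd:
  assumes "is_mdp P" "reach_prob P T \<sigma> t = 0" "reach_prob P T (\<sigma>(t := a)) t = 0"
  shows "reach_prob P T (\<sigma>(t := a)) s = reach_prob P T \<sigma> s"
proof -
  have "reach_within P T \<sigma> n t = 0" "reach_within P T (\<sigma>(t := a)) n t = 0" for n
    using assms(2,3) unfolding reach_prob_eq_0_iff[OF assms(1)] by blast+
  then have "reach_within P T (\<sigma>(t := a)) n s = reach_within P T \<sigma> n s" for n
    by (rule reach_within_fun_upd)
  then show ?thesis unfolding reach_prob_def by simp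
qed

lemma ex_strategy_reach_prob_eq_0_iff:
  assumes "is_mdp P"
  shows "(\<exists>\<sigma>\<in>strategies P. reach_prob P T \<sigma> s = 0) \<longleftrightarrow>
    (\<exists>Z. s \<in> Z \<and> Z \<inter> T = {} \<and> opt_closed P OMin Z)"
proof
  assume "\<exists>\<sigma>\<in>strategies P. reach_prob P T \<sigma> s = 0"
  then obtain \<sigma> where \<sigma>: "\<sigma> \<in> strategies P" "reach_prob P T \<sigma> s = 0" by blast
  then obtain Z where Z: "s \<in> Z" "Z \<inter> T = {}" "\<forall>z\<in>Z. Post P z (\<sigma> z) \<subseteq> Z"
    unfolding reach_prob_eq_0_iff_closed[OF assms] by blast
  have "opt_closed P OMin Z"
    using \<sigma>(1) Z(3) unfolding opt_closed_def opt_quant_def strategies_def by auto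
  with Z(1,2) show "\<exists>Z. s \<in> Z \<and> Z \<inter> T = {} \<and> opt_closed P OMin Z" by blast
next
  assume "\<exists>Z. s \<in> Z \<and> Z \<inter> T = {} \<and> opt_closed P OMin Z"
  then obtain Z where Z: "s \<in> Z" "Z \<inter> T = {}" "opt_closed P OMin Z" by blast
  have "\<exists>a\<in>Act P t. t \<in> Z \<longrightarrow> Post P t a \<subseteq> Z" for t
  proof (cases "t \<in> Z")
    case True
    then show ?thesis using Z(3) unfolding opt_closed_def opt_quant_def by simp
  next
    case False
    then show ?thesis using Act_nonempty[OF assms] by blast
  qed
  then obtain \<sigma> where \<sigma>: "\<sigma> \<in> strategies P" "\<forall>t. t \<in> Z \<longrightarrow> Post P t (\<sigma> t) \<subseteq> Z"
    using strategy_exists[of P "\<lambda>t a. t \<in> Z \<longrightarrow> Post P t a \<subseteq> Z"] by blast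
  have "reach_prob P T \<sigma> s = 0"
    unfolding reach_prob_eq_0_iff_closed[OF assms] using Z(1,2) \<sigma>(2) by (intro exI[of _ Z]) blast
  with \<sigma>(1) show "\<exists>\<sigma>\<in>strategies P. reach_prob P T \<sigma> s = 0" by blast
qed

lemma all_strategies_reach_prob_eq_0_iff:
  assumes "is_mdp P"
  shows "(\<forall>\<sigma>\<in>strategies P. reach_prob P T \<sigma> s = 0) \<longleftrightarrow>
    (\<exists>Z. s \<in> Z \<and> Z \<inter> T = {} \<and> opt_closed P OMax Z)"
proof
  define Z where "Z = {t. \<forall>\<sigma>\<in>strategies P. reach_prob P T \<sigma> t = 0}"
  assume "\<forall>\<sigma>\<in>strategies P. reach_prob P T \<sigma> s = 0"
  then have "s \<in> Z" unfolding Z_def by blast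
  moreover have "Z \<inter> T = {}"
  proof -
    obtain \<sigma> where "\<sigma> \<in> strategies P" using strategies_nonempty[OF assms] by blast
    then show ?thesis unfolding Z_def using reach_prob_eq_0_notin by blast
  qed
  moreover have "Post P t a \<subseteq> Z" if "t \<in> Z" "a \<in> Act P t" for t a
  proof
    fix s' assume "s' \<in> Post P t a"
    show "s' \<in> Z" unfolding Z_def
    proof (intro CollectI ballI)
      fix \<sigma> assume \<sigma>: "\<sigma> \<in> strategies P"
      then have "\<sigma>(t := a) \<in> strategies P" using that(2) by (simp add: strategies_def)
      with \<sigma> \<open>t \<in> Z\<close> have t_0: "reach_prob P T \<sigma> t = 0" "reach_prob P T (\<sigma>(t := a)) t = 0"
        unfolding Z_def by blast+
      have "reach_prob P T (\<sigma>(t := a)) s' = 0"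
        using \<open>s' \<in> Post P t a\<close> by (intro reach_prob_eq_0_Post[OF assms t_0(2)]) simp
      then show "reach_prob P T \<sigma> s' = 0" unfolding reach_prob_fun_upd[OF assms t_0] .
    qed
  qed
  then have "opt_closed P OMax Z" unfolding opt_closed_def opt_quant_def by simp
  ultimately show "\<exists>Z. s \<in> Z \<and> Z \<inter> T = {} \<and> opt_closed P OMax Z" by blast
next
  assume "\<exists>Z. s \<in> Z \<and> Z \<inter> T = {} \<and> opt_closed P OMax Z"
  then obtain Z where Z: "s \<in> Z" "Z \<inter> T = {}" "opt_closed P OMax Z" by blast
  show "\<forall>\<sigma>\<in>strategies P. reach_prob P T \<sigma> s = 0"
  proof
    fix \<sigma> assume "\<sigma> \<in> strategies P"
    then have "\<forall>z\<in>Z. Post P z (\<sigma> z) \<subseteq> Z"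
      using Z(3) unfolding opt_closed_def opt_quant_def strategies_def by simp
    then show "reach_prob P T \<sigma> s = 0"
      unfolding reach_prob_eq_0_iff_closed[OF assms] using Z(1,2) by (intro exI[of _ Z]) blast
  qed
qed

lemma reach_prob_opt_eq_0_iff:
  assumes "is_mdp P"
  shows "reach_prob_opt P T o' s = 0 \<longleftrightarrow> (\<exists>Z. s \<in> Z \<and> Z \<inter> T = {} \<and> opt_closed P o' Z)"
proof -
  have "reach_prob_opt P T o' s = 0 \<longleftrightarrow> opt_quant o' (strategies P) (\<lambda>\<sigma>. reach_prob P T \<sigma> s = 0)"
    unfolding reach_prob_opt_def using strategies_nonempty[OF assms] reach_prob_nonneg[OF assms]
    by (intro opt_of_eq_0_iff) auto
  then show ?thesis
    using ex_strategy_reach_prob_eq_0_iff[OF assms] all_strategies_reach_prob_eq_0_iff[OF assms]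
    by (cases o') (simp_all add: opt_quant_def)
qed

theorem lemma9:
  fixes P :: "'s::finite \<Rightarrow> 'a::finite \<Rightarrow> 's \<Rightarrow> real"
    and T :: "'s set" and o' :: opt and s :: 's
  assumes "is_mdp P"
  shows "lfp (Dtilde P T o') s = 0 \<longleftrightarrow> s \<in> {t. reach_prob_opt P T o' t = 0}"
  using lfp_Dtilde_eq_0_iff[OF assms] reach_prob_opt_eq_0_iff[OF assms] by simp

end
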